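(* Let $R$ be a commutative Noetherian ring of prime characteristic $p$ and suppose $c$ is a $p^{w_0}$-weak test element for $R$ for some $w_0\in\mathbb{N}_0$. For each ideal $\mathfrak{a}$ of $R$ let $G(\mathfrak{a})=\bigoplus_{n\ge0}R/(\mathfrak{a}^{[p^n]})^F$ be the graded left $R[x,f]$-module with $x(r+(\mathfrak{a}^{[p^n]})^F)=r^p+(\mathfrak{a}^{[p^{n+1}]})^F$, and let $G:=\bigoplus_{\mathfrak{a}}G(\mathfrak{a})$ over all ideals $\mathfrak{a}$ of $R$ (an $x$-torsion-free module). Let $U:=\bigoplus_{\mathfrak{a}}\bigoplus_{n\ge0}(\mathfrak{a}^{[p^n]})^*/(\mathfrak{a}^{[p^n]})^F$. Then (i) $U=\operatorname{ann}_G(\bigoplus_{n\ge0}Rcx^n)$, so $U$ is a special annihilator submodule of $G$; (ii) if $\mathfrak{b}$ is the $G$-special $R$-ideal with $\operatorname{grann}_{R[x,f]}U=\bigoplus_{n\ge0}\mathfrak{b}x^n$, then $\mathfrak{b}$ is the smallest member of $\mathcal{I}(G)$ of positive height.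
   Context: $R[x,f]$ is the Frobenius skew polynomial ring: free left $R$-module on $(x^i)_{i\ge0}$, $xr=r^px$. The Frobenius closure is $\mathfrak{a}^F=\{r: r^{p^n}\in\mathfrak{a}^{[p^n]}\text{ for some }n\}$, where $\mathfrak{a}^{[p^n]}$ is generated by $p^n$-th powers. $\operatorname{ann}_G\mathfrak{B}$, for a graded two-sided ideal $\mathfrak{B}=\bigoplus\mathfrak{b}_nx^n$ ($(\mathfrak{b}_n)$ ascending), is the set of elements killed by $\mathfrak{B}$; special annihilator submodules are those of this form. $\operatorname{grann}N$ is the set of $\sum r_ix^i$ with each $r_ix^i$ annihilating $N$. An ideal $\mathfrak{b}$ is $G$-special if $\operatorname{grann}N=\bigoplus_n\mathfrak{b}x^n$ for some submodule $N$; $\mathcal{I}(G)$ is the set of these; $R$ has infinite height. $R^\circ$, tight closure $\mathfrak{a}^*$ as usual. A $p^{w_0}$-weak test element is $c\in R^\circ$ such that for every ideal $\mathfrak{b}$ and $r\in R$: $r\in\mathfrak{b}^*$ iff $cr^{p^n}\in\mathfrak{b}^{[p^n]}$ for all $n\ge w_0$. *)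

theory Defs
  imports Main "HOL-Library.Extended_Nat" "HOL-Computational_Algebra.Primes"
begin

definition is_ideal :: "'a::comm_ring_1 set \<Rightarrow> bool" where
  "is_ideal I \<longleftrightarrow> 0 \<in> I \<and> (\<forall>x\<in>I. \<forall>y\<in>I. x + y \<in> I) \<and> (\<forall>r. \<forall>x\<in>I. r * x \<in> I)"

definition ideal_gen :: "'a::comm_ring_1 set \<Rightarrow> 'a set" where
  "ideal_gen S = \<Inter>{I. is_ideal I \<and> S \<subseteq> I}"

definition noetherian :: "'a::comm_ring_1 itself \<Rightarrow> bool" where
  "noetherian _ \<longleftrightarrow> (\<forall>I::'a set. is_ideal I \<longrightarrow> (\<exists>S. finite S \<and> I = ideal_gen S))"

definition is_prime_ideal :: "'a::comm_ring_1 set \<Rightarrow> bool" where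
  "is_prime_ideal P \<longleftrightarrow> is_ideal P \<and> P \<noteq> UNIV \<and> (\<forall>a b. a * b \<in> P \<longrightarrow> a \<in> P \<or> b \<in> P)"

definition is_minimal_prime :: "'a::comm_ring_1 set \<Rightarrow> bool" where
  "is_minimal_prime P \<longleftrightarrow> is_prime_ideal P \<and> \<not> (\<exists>Q. is_prime_ideal Q \<and> Q \<subset> P)"

definition R_circ :: "'a::comm_ring_1 set" where
  "R_circ = {c. \<forall>P. is_minimal_prime P \<longrightarrow> c \<notin> P}"

text \<open>Height of a prime: supremum of lengths n of chains P_0 < P_1 < ... < P_n = P of primes;
  height of an ideal: infimum of the heights of the primes containing it (infinity for the unit ideal).\<close>
definition prime_height :: "'a::comm_ring_1 set \<Rightarrow> enat" where
  "prime_height P = Sup {enat n | n. \<exists>C::nat \<Rightarrow> 'a set. (\<forall>i\<le>n. is_prime_ideal (C i))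
       \<and> (\<forall>i<n. C i \<subset> C (Suc i)) \<and> C n = P}"

definition ideal_height :: "'a::comm_ring_1 set \<Rightarrow> enat" where
  "ideal_height I = (INF P\<in>{P. is_prime_ideal P \<and> I \<subseteq> P}. prime_height P)"

definition frob_pow :: "'a::comm_ring_1 set \<Rightarrow> nat \<Rightarrow> 'a set" where
  "frob_pow a q = ideal_gen {r ^ q | r. r \<in> a}"

definition frob_closure :: "nat \<Rightarrow> 'a::comm_ring_1 set \<Rightarrow> 'a set" where
  "frob_closure p a = {r. \<exists>n. r ^ (p ^ n) \<in> frob_pow a (p ^ n)}"

definition tight_closure :: "nat \<Rightarrow> 'a::comm_ring_1 set \<Rightarrow> 'a set" where
  "tight_closure p a = {r. \<exists>c\<in>R_circ. \<exists>N. \<forall>n\<ge>N. c * r ^ (p ^ n) \<in> frob_pow a (p ^ n)}"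

definition weak_test_element :: "nat \<Rightarrow> nat \<Rightarrow> 'a::comm_ring_1 \<Rightarrow> bool" where
  "weak_test_element p w0 c \<longleftrightarrow> c \<in> R_circ \<and>
     (\<forall>b r. is_ideal b \<longrightarrow>
        (r \<in> tight_closure p b \<longleftrightarrow> (\<forall>n\<ge>w0. c * r ^ (p ^ n) \<in> frob_pow b (p ^ n))))"

text \<open>An element of G is a function g sending an ideal a and degree n to a coset of
  J a n = (a^[p^n])^F in R, almost all of them zero (i.e. equal to J a n).  For sets a that
  are not ideals the component is forced to be zero.\<close>

definition Jc :: "nat \<Rightarrow> 'a::comm_ring_1 set \<Rightarrow> nat \<Rightarrow> 'a set" where
  "Jc p a n = frob_closure p (frob_pow a (p ^ n))"

definition coset :: "'a::comm_ring_1 \<Rightarrow> 'a set \<Rightarrow> 'a set" where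
  "coset r I = (\<lambda>i. r + i) ` I"

definition Gcar :: "nat \<Rightarrow> ('a::comm_ring_1 set \<Rightarrow> nat \<Rightarrow> 'a set) set" where
  "Gcar p = {g. (\<forall>a n. is_ideal a \<longrightarrow> (\<exists>r. g a n = coset r (Jc p a n)))
               \<and> (\<forall>a n. \<not> is_ideal a \<longrightarrow> g a n = Jc p a n)
               \<and> finite {(a, n). g a n \<noteq> Jc p a n}}"

definition Gzero :: "nat \<Rightarrow> 'a::comm_ring_1 set \<Rightarrow> nat \<Rightarrow> 'a set" where
  "Gzero p = (\<lambda>a n. Jc p a n)"

definition Gadd :: "('a::comm_ring_1 set \<Rightarrow> nat \<Rightarrow> 'a set) \<Rightarrow> ('a set \<Rightarrow> nat \<Rightarrow> 'a set)
    \<Rightarrow> ('a set \<Rightarrow> nat \<Rightarrow> 'a set)" where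
  "Gadd g h = (\<lambda>a n. {s + t | s t. s \<in> g a n \<and> t \<in> h a n})"

text \<open>Action of the homogeneous element r x^k of R[x,f]:
  r x^k (s + J a m) = r s^(p^k) + J a (m+k).\<close>
definition Gact :: "nat \<Rightarrow> 'a::comm_ring_1 \<Rightarrow> nat \<Rightarrow> ('a set \<Rightarrow> nat \<Rightarrow> 'a set)
    \<Rightarrow> ('a set \<Rightarrow> nat \<Rightarrow> 'a set)" where
  "Gact p r k g = (\<lambda>a m. if is_ideal a \<and> k \<le> m
       then {r * s ^ (p ^ k) + j | s j. s \<in> g a (m - k) \<and> j \<in> Jc p a m}
       else Jc p a m)"

text \<open>R[x,f]-submodules of G (closure under all r x^k; additive inverses come from r = -1).\<close>
definition Gsubmodule :: "nat \<Rightarrow> ('a::comm_ring_1 set \<Rightarrow> nat \<Rightarrow> 'a set) set \<Rightarrow> bool" where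
  "Gsubmodule p N \<longleftrightarrow> N \<subseteq> Gcar p \<and> Gzero p \<in> N \<and> (\<forall>g\<in>N. \<forall>h\<in>N. Gadd g h \<in> N)
      \<and> (\<forall>r k. \<forall>g\<in>N. Gact p r k g \<in> N)"

text \<open>ann_G of the graded two-sided ideal (+)_n b_n x^n.\<close>
definition Gann :: "nat \<Rightarrow> (nat \<Rightarrow> 'a::comm_ring_1 set) \<Rightarrow> ('a set \<Rightarrow> nat \<Rightarrow> 'a set) set" where
  "Gann p bs = {g \<in> Gcar p. \<forall>n. \<forall>r\<in>bs n. Gact p r n g = Gzero p}"

text \<open>The degree-n component of grann N: grann N = (+)_n (grann_comp N n) x^n.\<close>
definition grann_comp :: "nat \<Rightarrow> ('a::comm_ring_1 set \<Rightarrow> nat \<Rightarrow> 'a set) set \<Rightarrow> nat \<Rightarrow> 'a set" where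
  "grann_comp p N n = {r. \<forall>g\<in>N. Gact p r n g = Gzero p}"

definition G_special_ideals :: "nat \<Rightarrow> 'a::comm_ring_1 set set" where
  "G_special_ideals p = {b. \<exists>N. Gsubmodule p N \<and> (\<forall>n. grann_comp p N n = b)}"

definition Usub :: "nat \<Rightarrow> ('a::comm_ring_1 set \<Rightarrow> nat \<Rightarrow> 'a set) set" where
  "Usub p = {g \<in> Gcar p. \<forall>a n. is_ideal a \<longrightarrow> g a n \<subseteq> tight_closure p (frob_pow a (p ^ n))}"

end

theory Submission
  imports Defs
begin

(*
  Everything rests on one translation: r x^k kills the class of s in R/(a^[p^n])^F exactly when
  r s^(p^k) lies in (a^[p^(n+k)])^F.  If s is in (a^[p^n])^*, the weak test element gives
  c s^(p^(k+w0)) in a^[p^(n+k+w0)], hence (c s^(p^k))^(p^w0) in (a^[p^(n+k)])^[p^w0], so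
  c s^(p^k) is in the Frobenius closure and c x^k kills U.  Conversely, if some d in R^o
  satisfies d s^(p^k) in (a^[p^(n+k)])^F for all k, then, Frobenius closure being inside tight
  closure, the test element yields c d^(p^w0) s^(p^j) in a^[p^j] for all j >= w0, so s is in
  (a^[p^n])^*.  Thus every submodule whose graded annihilator contains an element of R^o lies
  in U; with d = c this gives (i).  For (ii): c lies in b, so b has positive height; and a
  G-special ideal of positive height in a Noetherian ring contains an element of R^o (prime
  avoidance over the finitely many minimal primes), so its submodule lies in U and b is
  contained in it.  The graded annihilator of a submodule is the same ideal in every degree
  because G is x-torsion-free: r^p in (a^[p^(n+1)])^F forces r in (a^[p^n])^F.
*)

section \<open>Ideals\<close>

lemma is_ideal_ideal_gen: "is_ideal (ideal_gen S)"
  unfolding is_ideal_def ideal_gen_def by auto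

lemma subset_ideal_gen: "S \<subseteq> ideal_gen S"
  unfolding ideal_gen_def by auto

lemma ideal_gen_least: "is_ideal I \<Longrightarrow> S \<subseteq> I \<Longrightarrow> ideal_gen S \<subseteq> I"
  unfolding ideal_gen_def by auto

lemma ideal_zero: "is_ideal I \<Longrightarrow> 0 \<in> I"
  unfolding is_ideal_def by auto

lemma ideal_add: "is_ideal I \<Longrightarrow> x \<in> I \<Longrightarrow> y \<in> I \<Longrightarrow> x + y \<in> I"
  unfolding is_ideal_def by auto

lemma ideal_mult_left: "is_ideal I \<Longrightarrow> x \<in> I \<Longrightarrow> r * x \<in> I"
  unfolding is_ideal_def by auto

lemma ideal_mult_right: "is_ideal I \<Longrightarrow> x \<in> I \<Longrightarrow> x * r \<in> I"
  unfolding is_ideal_def by (auto simp: mult.commute)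

lemma ideal_diff: "is_ideal I \<Longrightarrow> x \<in> I \<Longrightarrow> y \<in> I \<Longrightarrow> x - y \<in> I"
  using ideal_add[of I x "(-1) * y"] ideal_mult_left[of I y "-1"] by simp

lemma ideal_absorbs_translates:
  assumes J: "is_ideal J" and s0: "s0 \<in> S" and f: "\<And>s. s \<in> S \<Longrightarrow> f s \<in> J"
  shows "{f s + j | s j. s \<in> S \<and> j \<in> J} = J"
proof (intro antisym subsetI)
  fix x assume "x \<in> {f s + j | s j. s \<in> S \<and> j \<in> J}"
  then obtain s j where "x = f s + j" "s \<in> S" "j \<in> J"
    by blast
  then show "x \<in> J"
    using ideal_add[OF J f] by blast
next
  fix j assume "j \<in> J"
  then have "j - f s0 \<in> J"
    using ideal_diff[OF J _ f[OF s0]] by blast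
  moreover have "j = f s0 + (j - f s0)"
    by simp
  ultimately show "j \<in> {f s + j | s j. s \<in> S \<and> j \<in> J}"
    using s0 by blast
qed

lemma coset_self: "is_ideal I \<Longrightarrow> r \<in> coset r I"
  unfolding coset_def using ideal_zero by force

lemma coset_zero: "coset 0 I = I"
  unfolding coset_def by simp

lemma coset_add:
  assumes "is_ideal I"
  shows "{s + t | s t. s \<in> coset r I \<and> t \<in> coset u I} = coset (r + u) I"
proof (intro antisym subsetI)
  fix x assume "x \<in> {s + t | s t. s \<in> coset r I \<and> t \<in> coset u I}"
  then obtain i j where "i \<in> I" "j \<in> I" "x = (r + i) + (u + j)"
    unfolding coset_def by blast
  moreover have "(r + i) + (u + j) = (r + u) + (i + j)"
    by (simp add: add_ac)
  ultimately show "x \<in> coset (r + u) I"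
    unfolding coset_def using ideal_add[OF assms] by blast
next
  fix x assume "x \<in> coset (r + u) I"
  then obtain i where "i \<in> I" "x = (r + i) + u"
    unfolding coset_def by (auto simp: add_ac)
  then show "x \<in> {s + t | s t. s \<in> coset r I \<and> t \<in> coset u I}"
    unfolding coset_def using ideal_zero[OF assms] by force
qed

lemma prime_ideal_imp_ideal: "is_prime_ideal P \<Longrightarrow> is_ideal P"
  unfolding is_prime_ideal_def by blast

lemma prime_ideal_one_notin: "is_prime_ideal P \<Longrightarrow> (1::'a::comm_ring_1) \<notin> P"
  unfolding is_prime_ideal_def using ideal_mult_left[of P 1] by auto

lemma prime_ideal_prod_mem:
  assumes "is_prime_ideal P" "finite A" "prod x A \<in> P"
  shows "\<exists>Q\<in>A. (x Q :: 'a::comm_ring_1) \<in> P"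
  using assms(2,3)
proof (induction A rule: finite_induct)
  case empty
  then show ?case using prime_ideal_one_notin[OF assms(1)] by simp
next
  case (insert Q A)
  then show ?case using assms(1) unfolding is_prime_ideal_def by auto
qed

lemma one_in_R_circ: "(1::'a::comm_ring_1) \<in> R_circ"
  unfolding R_circ_def is_minimal_prime_def using prime_ideal_one_notin by blast

lemma R_circ_mult: "c \<in> R_circ \<Longrightarrow> d \<in> R_circ \<Longrightarrow> c * d \<in> R_circ"
  unfolding R_circ_def is_minimal_prime_def is_prime_ideal_def by blast

lemma R_circ_power: "c \<in> R_circ \<Longrightarrow> c ^ n \<in> R_circ"
  by (induction n) (auto simp: one_in_R_circ R_circ_mult)

section \<open>Noetherian rings and minimal primes\<close>

lemma is_ideal_Union_chain:
  assumes ideal: "\<And>i. is_ideal (f i)" and chain: "\<And>i j. f i \<subseteq> f j \<or> f j \<subseteq> f i"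
  shows "is_ideal (\<Union>(range f))"
  unfolding is_ideal_def
proof (intro conjI ballI allI)
  show "0 \<in> \<Union>(range f)"
    using ideal_zero[OF ideal] by blast
next
  fix x y assume "x \<in> \<Union>(range f)" "y \<in> \<Union>(range f)"
  then obtain i j where "x \<in> f i" "y \<in> f j"
    by blast
  with chain[of i j] have "x + y \<in> f i \<or> x + y \<in> f j"
    using ideal_add[OF ideal] by blast
  then show "x + y \<in> \<Union>(range f)"
    by blast
next
  fix r x assume "x \<in> \<Union>(range f)"
  then show "r * x \<in> \<Union>(range f)"
    using ideal_mult_left[OF ideal] by blast
qed

lemma noetherian_wf_ideal_supset:
  assumes "noetherian TYPE('a::comm_ring_1)"
  shows "wf {(J, I::'a set). is_ideal I \<and> is_ideal J \<and> I \<subset> J}"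
  unfolding wf_iff_no_infinite_down_chain
proof
  assume "\<exists>f. \<forall>i. (f (Suc i), f i) \<in> {(J, I::'a set). is_ideal I \<and> is_ideal J \<and> I \<subset> J}"
  then obtain f :: "nat \<Rightarrow> 'a set" where f: "\<And>i. is_ideal (f i)" "\<And>i. f i \<subset> f (Suc i)"
    by blast
  have "f i \<subseteq> f j" if "i \<le> j" for i j
    using lift_Suc_mono_le[of f, OF psubset_imp_subset[OF f(2)] that] .
  then have comparable: "f i \<subseteq> f j \<or> f j \<subseteq> f i" for i j
    using nat_le_linear by blast
  obtain S where S: "finite S" "\<Union>(range f) = ideal_gen S"
    using assms[unfolded noetherian_def, rule_format, OF is_ideal_Union_chain[of f, OF f(1) comparable]]
    by (elim exE conjE)
  have chain: "subset.chain UNIV (range f)"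
    using comparable unfolding subset.chain_def by (auto simp: psubset_eq)
  have "S \<subseteq> \<Union>(range f)"
    using S(2) subset_ideal_gen by blast
  then obtain B where "B \<in> range f" "S \<subseteq> B"
    by (rule finite_subset_Union_chain[OF S(1) _ _ chain]) auto
  then obtain M where "S \<subseteq> f M"
    by blast
  then have "\<Union>(range f) \<subseteq> f M"
    unfolding S(2) by (rule ideal_gen_least[OF f(1)])
  then have "f (Suc M) \<subseteq> f M"
    by (meson rangeI UnionI subsetD subsetI)
  then show False
    using f(2)[of M] by blast
qed

lemma noetherian_ideal_induct [consumes 2, case_names step]:
  assumes "noetherian TYPE('a::comm_ring_1)" "is_ideal (I::'a set)"
    and step: "\<And>I. is_ideal I \<Longrightarrow> (\<And>J. is_ideal J \<Longrightarrow> I \<subset> J \<Longrightarrow> Q J) \<Longrightarrow> Q I"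
  shows "Q I"
proof -
  have "is_ideal I \<longrightarrow> Q I"
    using noetherian_wf_ideal_supset[OF assms(1)]
  proof (induction I rule: wf_induct_rule)
    case (less I)
    show ?case
    proof
      assume I: "is_ideal I"
      show "Q I"
      proof (rule step[OF I])
        fix J assume "is_ideal J" "I \<subset> J"
        then show "Q J"
          using less.IH I by blast
      qed
    qed
  qed
  with assms(2) show ?thesis
    by blast
qed

definition finite_prime_cover :: "'a set set \<Rightarrow> 'a::comm_ring_1 set \<Rightarrow> bool" where
  "finite_prime_cover F I \<longleftrightarrow> finite F \<and> (\<forall>P\<in>F. is_prime_ideal P)
     \<and> (\<forall>P. is_prime_ideal P \<longrightarrow> I \<subseteq> P \<longrightarrow> (\<exists>Q\<in>F. Q \<subseteq> P))"

lemma finite_prime_cover_Un: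
  assumes "finite_prime_cover F I" "finite_prime_cover F' I'"
    and "\<And>P. is_prime_ideal P \<Longrightarrow> J \<subseteq> P \<Longrightarrow> I \<subseteq> P \<or> I' \<subseteq> P"
  shows "finite_prime_cover (F \<union> F') J"
  using assms unfolding finite_prime_cover_def by (metis Un_iff finite_UnI)

lemma prime_ideal_over_ideal_gen_insert:
  assumes "is_prime_ideal P" "I \<subseteq> P" "a * b \<in> I"
  shows "ideal_gen (insert a I) \<subseteq> P \<or> ideal_gen (insert b I) \<subseteq> P"
proof -
  have "a \<in> P \<or> b \<in> P"
    using assms unfolding is_prime_ideal_def by blast
  then show ?thesis
    using assms(2) ideal_gen_least[OF prime_ideal_imp_ideal[OF assms(1)]] by (meson insert_subset)
qed

lemma noetherian_finite_prime_cover: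
  assumes "noetherian TYPE('a::comm_ring_1)" "is_ideal (I::'a set)"
  shows "\<exists>F. finite_prime_cover F I"
  using assms
proof (induction I rule: noetherian_ideal_induct)
  case (step I)
  show ?case
  proof (cases "I = UNIV \<or> is_prime_ideal I")
    case True
    then show ?thesis
    proof
      assume "I = UNIV"
      then have "finite_prime_cover {} I"
        unfolding finite_prime_cover_def using prime_ideal_one_notin by blast
      then show ?thesis ..
    next
      assume "is_prime_ideal I"
      then have "finite_prime_cover {I} I"
        unfolding finite_prime_cover_def by blast
      then show ?thesis ..
    qed
  next
    case False
    then obtain a b where ab: "a * b \<in> I" "a \<notin> I" "b \<notin> I"
      using step(1) unfolding is_prime_ideal_def by blast
    have enlarged: "is_ideal (ideal_gen (insert x I))" "I \<subset> ideal_gen (insert x I)" if "x \<notin> I" for x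
      using that subset_ideal_gen[of "insert x I"] by (blast intro: is_ideal_ideal_gen)+
    obtain Fa Fb where "finite_prime_cover Fa (ideal_gen (insert a I))"
      "finite_prime_cover Fb (ideal_gen (insert b I))"
      using step(2)[OF enlarged[OF ab(2)]] step(2)[OF enlarged[OF ab(3)]] by blast
    then have "finite_prime_cover (Fa \<union> Fb) I"
      using prime_ideal_over_ideal_gen_insert[OF _ _ ab(1)] by (rule finite_prime_cover_Un)
    then show ?thesis ..
  qed
qed

lemma noetherian_finite_minimal_primes:
  assumes "noetherian TYPE('a::comm_ring_1)"
  shows "finite {P::'a set. is_minimal_prime P}"
proof -
  have "is_ideal {0::'a}"
    unfolding is_ideal_def by auto
  then obtain F :: "'a set set" where F: "finite_prime_cover F {0}"
    using noetherian_finite_prime_cover[OF assms] by blast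
  have "{P. is_minimal_prime P} \<subseteq> F"
  proof
    fix P :: "'a set" assume "P \<in> {P. is_minimal_prime P}"
    then have P: "is_prime_ideal P" "\<not> (\<exists>Q. is_prime_ideal Q \<and> Q \<subset> P)"
      unfolding is_minimal_prime_def by auto
    then obtain Q where "Q \<in> F" "Q \<subseteq> P"
      using F ideal_zero[OF prime_ideal_imp_ideal[OF P(1)]] unfolding finite_prime_cover_def by blast
    then show "P \<in> F"
      using P F unfolding finite_prime_cover_def by (metis psubsetI)
  qed
  then show ?thesis
    using F finite_subset unfolding finite_prime_cover_def by blast
qed

lemma prime_avoidance_witness:
  assumes "finite F" "\<forall>P\<in>F. is_prime_ideal P" "P1 \<in> F"
    and x: "\<And>P. P \<in> F \<Longrightarrow> x P \<in> P \<and> x P \<notin> \<Union>(F - {P})"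
  shows "x P1 + prod x (F - {P1}) \<notin> \<Union>(F :: 'a::comm_ring_1 set set)"
proof
  assume "x P1 + prod x (F - {P1}) \<in> \<Union>F"
  then obtain P where P: "P \<in> F" "x P1 + prod x (F - {P1}) \<in> P"
    by blast
  have PI: "is_ideal P"
    using assms(2) P(1) prime_ideal_imp_ideal by blast
  have fin: "finite (F - {P1})"
    using assms(1) by simp
  show False
  proof (cases "P = P1")
    case True
    then have "prod x (F - {P1}) \<in> P1"
      using ideal_diff[OF PI P(2), of "x P1"] x[OF P(1)] by simp
    then obtain Q where "Q \<in> F - {P1}" "x Q \<in> P1"
      using prime_ideal_prod_mem[OF _ fin] assms(2,3) by blast
    then show False
      using x[of Q] assms(3) by blast
  next
    case False
    then have "prod x (F - {P1}) = x P * prod x (F - {P1} - {P})"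
      using prod.remove[OF fin, of P x] P(1) by simp
    then have "prod x (F - {P1}) \<in> P"
      using ideal_mult_right[OF PI] x[OF P(1)] by simp
    from ideal_diff[OF PI P(2) this] have "x P1 \<in> P"
      by simp
    then show False
      using x[OF assms(3)] P(1) False by blast
  qed
qed

lemma prime_avoidance_step:
  assumes F: "finite F" "\<forall>P\<in>F. is_prime_ideal P" and I: "is_ideal I" "I \<subseteq> \<Union>F"
    and P1: "P1 \<in> F" and P2: "P2 \<in> F - {P1}"
    and irredundant: "\<not> (\<exists>P\<in>F. I \<subseteq> \<Union>(F - {P}))"
  shows False
proof -
  have "\<forall>P\<in>F. \<exists>y. y \<in> I \<and> y \<notin> \<Union>(F - {P})"
    using irredundant by blast
  then obtain x where x: "\<And>P. P \<in> F \<Longrightarrow> x P \<in> I \<and> x P \<notin> \<Union>(F - {P})"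
    by metis
  have x_own: "x P \<in> P \<and> x P \<notin> \<Union>(F - {P})" if "P \<in> F" for P
    using x[OF that] I(2) by blast
  have "prod x (F - {P1}) = x P2 * prod x (F - {P1} - {P2})"
    using prod.remove[OF _ P2, of x] F(1) by simp
  then have "prod x (F - {P1}) \<in> I"
    using ideal_mult_right[OF I(1)] x P2 by simp
  then have "x P1 + prod x (F - {P1}) \<in> \<Union>F"
    using ideal_add[OF I(1)] x[OF P1] I(2) by blast
  moreover have "x P1 + prod x (F - {P1}) \<notin> \<Union>F"
    by (rule prime_avoidance_witness[OF F P1 x_own])
  ultimately show False
    by contradiction
qed

lemma prime_avoidance:
  assumes "finite F" "\<forall>P\<in>F. is_prime_ideal P" "is_ideal I" "I \<subseteq> \<Union>F"
  shows "\<exists>P\<in>F. I \<subseteq> (P::'a::comm_ring_1 set)"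
  using assms
proof (induction F rule: finite_psubset_induct)
  case (psubset F)
  show ?case
  proof (cases "\<exists>P0\<in>F. I \<subseteq> \<Union>(F - {P0})")
    case True
    then obtain P0 where P0: "P0 \<in> F" "I \<subseteq> \<Union>(F - {P0})"
      by blast
    have smaller: "F - {P0} \<subset> F"
      using P0(1) by blast
    have primes: "\<forall>P\<in>F - {P0}. is_prime_ideal P"
      using psubset.prems(1) by blast
    have "\<exists>P\<in>F - {P0}. I \<subseteq> P"
      by (rule psubset.IH[OF smaller primes psubset.prems(2) P0(2)])
    then show ?thesis
      by blast
  next
    case False
    obtain P1 where P1: "P1 \<in> F"
      using psubset.prems(2,3) ideal_zero by blast
    have "F - {P1} = {}"
      using prime_avoidance_step[OF psubset.hyps psubset.prems P1 _ False] by blast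
    with P1 have "F = {P1}"
      by blast
    with psubset.prems(3) have "I \<subseteq> P1"
      by simp
    with P1 show ?thesis ..
  qed
qed

lemma prime_height_minimal_prime:
  assumes "is_minimal_prime (P::'a::comm_ring_1 set)"
  shows "prime_height P = 0"
proof -
  have "n = 0" if C: "\<forall>i\<le>n. is_prime_ideal (C i)" "\<forall>i<n. C i \<subset> C (Suc i)" "C n = P"
    for n and C :: "nat \<Rightarrow> 'a set"
  proof (rule ccontr)
    assume "n \<noteq> 0"
    then have "is_prime_ideal (C (n - 1))" "C (n - 1) \<subset> P"
      using C(1) C(2)[rule_format, of "n - 1"] C(3) by simp_all
    then show False
      using assms unfolding is_minimal_prime_def by blast
  qed
  then have "prime_height P \<le> 0"
    unfolding prime_height_def by (auto intro!: Sup_least simp: zero_enat_def)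
  then show ?thesis by simp
qed

lemma one_le_prime_height:
  assumes "is_prime_ideal Q" "is_prime_ideal P" "Q \<subset> P"
  shows "1 \<le> prime_height (P::'a::comm_ring_1 set)"
proof -
  let ?C = "\<lambda>i::nat. if i = 0 then Q else P"
  have "enat 1 \<in> {enat n | n. \<exists>C::nat \<Rightarrow> 'a set. (\<forall>i\<le>n. is_prime_ideal (C i))
      \<and> (\<forall>i<n. C i \<subset> C (Suc i)) \<and> C n = P}"
    using assms by (intro CollectI exI[of _ 1] conjI refl exI[of _ ?C]) auto
  then show ?thesis
    unfolding prime_height_def one_enat_def by (rule Sup_upper)
qed

lemma ideal_height_le_prime_height:
  "is_prime_ideal P \<Longrightarrow> I \<subseteq> P \<Longrightarrow> ideal_height I \<le> prime_height P"
  unfolding ideal_height_def by (rule INF_lower) blast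

lemma ideal_height_pos_iff:
  "0 < ideal_height (I::'a::comm_ring_1 set) \<longleftrightarrow>
    (\<forall>P. is_prime_ideal P \<longrightarrow> I \<subseteq> P \<longrightarrow> \<not> is_minimal_prime P)"
proof
  assume "0 < ideal_height I"
  then show "\<forall>P. is_prime_ideal P \<longrightarrow> I \<subseteq> P \<longrightarrow> \<not> is_minimal_prime P"
    using ideal_height_le_prime_height prime_height_minimal_prime by (metis leD)
next
  assume H: "\<forall>P. is_prime_ideal P \<longrightarrow> I \<subseteq> P \<longrightarrow> \<not> is_minimal_prime P"
  have one_le: "1 \<le> prime_height P" if "is_prime_ideal P" "I \<subseteq> P" for P
    using H that one_le_prime_height unfolding is_minimal_prime_def by blast
  have "1 \<le> ideal_height I"
    unfolding ideal_height_def by (rule INF_greatest) (auto intro: one_le)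
  then show "0 < ideal_height I"
    using less_le_trans[OF zero_less_one] by blast
qed

lemma ideal_height_pos_iff_meets_R_circ:
  assumes "noetherian TYPE('a::comm_ring_1)" "is_ideal (I::'a set)"
  shows "0 < ideal_height I \<longleftrightarrow> I \<inter> R_circ \<noteq> {}"
proof
  assume pos: "0 < ideal_height I"
  show "I \<inter> R_circ \<noteq> {}"
  proof
    assume "I \<inter> R_circ = {}"
    then have "I \<subseteq> \<Union>{P. is_minimal_prime P}"
      unfolding R_circ_def by blast
    moreover have "\<forall>P\<in>{P. is_minimal_prime P}. is_prime_ideal P"
      unfolding is_minimal_prime_def by blast
    ultimately obtain P where "is_minimal_prime P" "I \<subseteq> P"
      using prime_avoidance[OF noetherian_finite_minimal_primes[OF assms(1)] _ assms(2)] by blast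
    with pos show False
      unfolding ideal_height_pos_iff is_minimal_prime_def by blast
  qed
next
  assume "I \<inter> R_circ \<noteq> {}"
  then show "0 < ideal_height I"
    unfolding ideal_height_pos_iff R_circ_def by blast
qed

section \<open>Frobenius powers, Frobenius closure and tight closure\<close>

lemma is_ideal_frob_pow: "is_ideal (frob_pow a q)"
  unfolding frob_pow_def by (rule is_ideal_ideal_gen)

lemma power_mem_frob_pow: "x \<in> a \<Longrightarrow> x ^ q \<in> frob_pow a q"
  unfolding frob_pow_def by (rule subsetD[OF subset_ideal_gen]) blast

lemma power_pow_pow_add: "((x::'a::monoid_mult) ^ (p ^ m)) ^ (p ^ n) = x ^ (p ^ (m + n))"
  by (simp add: power_add power_mult)

lemma weak_test_element_R_circ: "weak_test_element p w0 c \<Longrightarrow> c \<in> R_circ"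
  unfolding weak_test_element_def by blast

lemma weak_test_elementD:
  assumes "weak_test_element p w0 c" "is_ideal b" "r \<in> tight_closure p b" "w0 \<le> n"
  shows "c * r ^ (p ^ n) \<in> frob_pow b (p ^ n)"
  using assms unfolding weak_test_element_def by blast

type_synonym 'a G_elt = "'a set \<Rightarrow> nat \<Rightarrow> 'a set"

context
  fixes p :: nat
  assumes prime_p: "prime p" and char_p: "CHAR('a::comm_ring_1) = p"
begin

lemma p_pos: "0 < p"
  using prime_gt_0_nat[OF prime_p] .

lemma frobenius_add: "((x::'a) + y) ^ (p ^ n) = x ^ (p ^ n) + y ^ (p ^ n)"
  using freshmans_dream'[where m = "p ^ n" and n = n and x = x and y = y] prime_p char_p by simp

lemma power_mem_ideal_gen_powers:
  assumes "(x::'a) \<in> ideal_gen S"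
  shows "x ^ (p ^ e) \<in> ideal_gen {s ^ (p ^ e) | s. s \<in> S}"
proof -
  let ?T = "ideal_gen {s ^ (p ^ e) | s. s \<in> S}"
  have T: "is_ideal ?T"
    by (rule is_ideal_ideal_gen)
  have "is_ideal {x. x ^ (p ^ e) \<in> ?T}"
    unfolding is_ideal_def
    using ideal_zero[OF T] ideal_add[OF T] ideal_mult_left[OF T] p_pos
    by (simp add: frobenius_add power_mult_distrib power_0_left)
  moreover have "S \<subseteq> {x. x ^ (p ^ e) \<in> ?T}"
  proof
    fix s assume "s \<in> S"
    then have "s ^ (p ^ e) \<in> {s ^ (p ^ e) | s. s \<in> S}"
      by blast
    then show "s \<in> {x. x ^ (p ^ e) \<in> ?T}"
      by (simp add: subsetD[OF subset_ideal_gen])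
  qed
  ultimately have "ideal_gen S \<subseteq> {x. x ^ (p ^ e) \<in> ?T}"
    by (rule ideal_gen_least)
  from subsetD[OF this assms] show ?thesis
    by simp
qed

lemma frob_pow_frob_pow: "frob_pow (frob_pow a (p ^ m)) (p ^ n) = frob_pow (a::'a set) (p ^ (m + n))"
proof (rule antisym)
  have gen: "ideal_gen {t ^ (p ^ n) | t. t \<in> {s ^ (p ^ m) | s. s \<in> a}} \<subseteq> frob_pow a (p ^ (m + n))"
    by (rule ideal_gen_least[OF is_ideal_frob_pow])
      (auto simp: power_pow_pow_add intro: power_mem_frob_pow)
  have powers: "t ^ (p ^ n) \<in> frob_pow a (p ^ (m + n))" if "t \<in> frob_pow a (p ^ m)" for t
    using power_mem_ideal_gen_powers[of t "{s ^ (p ^ m) | s. s \<in> a}" n] that gen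
    unfolding frob_pow_def by blast
  show "frob_pow (frob_pow a (p ^ m)) (p ^ n) \<subseteq> frob_pow a (p ^ (m + n))"
    unfolding frob_pow_def[of "frob_pow a (p ^ m)"]
    by (rule ideal_gen_least[OF is_ideal_frob_pow]) (use powers in blast)
  show "frob_pow a (p ^ (m + n)) \<subseteq> frob_pow (frob_pow a (p ^ m)) (p ^ n)"
    unfolding frob_pow_def[of a "p ^ (m + n)"]
    by (rule ideal_gen_least[OF is_ideal_frob_pow])
      (auto simp flip: power_pow_pow_add intro: power_mem_frob_pow)
qed

lemma power_mem_frob_pow_frob_pow:
  "(y::'a) \<in> frob_pow a (p ^ m) \<Longrightarrow> y ^ (p ^ n) \<in> frob_pow a (p ^ (m + n))"
  using power_mem_frob_pow[of y "frob_pow a (p ^ m)" "p ^ n"] by (simp add: frob_pow_frob_pow)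

lemma frob_closure_exponent_mono:
  assumes "(r::'a) ^ (p ^ n) \<in> frob_pow b (p ^ n)" "n \<le> n'"
  shows "r ^ (p ^ n') \<in> frob_pow b (p ^ n')"
proof -
  obtain k where n': "n' = n + k"
    using assms(2) le_Suc_ex by blast
  show ?thesis
    using power_mem_frob_pow_frob_pow[OF assms(1), of k] unfolding n'
    by (simp add: power_pow_pow_add)
qed

lemma is_ideal_frob_closure: "is_ideal (frob_closure p (b::'a set))"
  unfolding is_ideal_def
proof (intro conjI ballI allI)
  show "0 \<in> frob_closure p b"
    unfolding frob_closure_def using p_pos by (simp add: ideal_zero[OF is_ideal_frob_pow] power_0_left)
next
  fix x y assume "x \<in> frob_closure p b" "y \<in> frob_closure p b"
  then obtain i j where i: "x ^ (p ^ i) \<in> frob_pow b (p ^ i)" and j: "y ^ (p ^ j) \<in> frob_pow b (p ^ j)"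
    unfolding frob_closure_def by blast
  have "x ^ (p ^ (i + j)) \<in> frob_pow b (p ^ (i + j))" "y ^ (p ^ (i + j)) \<in> frob_pow b (p ^ (i + j))"
    using frob_closure_exponent_mono[OF i] frob_closure_exponent_mono[OF j] by simp_all
  then have "(x + y) ^ (p ^ (i + j)) \<in> frob_pow b (p ^ (i + j))"
    unfolding frobenius_add by (rule ideal_add[OF is_ideal_frob_pow])
  then show "x + y \<in> frob_closure p b"
    unfolding frob_closure_def by blast
next
  fix r x assume "x \<in> frob_closure p b"
  then obtain i where "x ^ (p ^ i) \<in> frob_pow b (p ^ i)"
    unfolding frob_closure_def by blast
  then have "(r * x) ^ (p ^ i) \<in> frob_pow b (p ^ i)"
    unfolding power_mult_distrib by (rule ideal_mult_left[OF is_ideal_frob_pow])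
  then show "r * x \<in> frob_closure p b"
    unfolding frob_closure_def by blast
qed

lemma frob_closure_subset_tight_closure: "frob_closure p (b::'a set) \<subseteq> tight_closure p b"
proof
  fix r assume "r \<in> frob_closure p b"
  then obtain n where n: "r ^ (p ^ n) \<in> frob_pow b (p ^ n)"
    unfolding frob_closure_def by blast
  have "\<forall>n'\<ge>n. 1 * r ^ (p ^ n') \<in> frob_pow b (p ^ n')"
    using frob_closure_exponent_mono[OF n] by simp
  then show "r \<in> tight_closure p b"
    unfolding tight_closure_def using one_in_R_circ by blast
qed

lemma Jc_add: "Jc p a (n + k) = frob_closure p (frob_pow (frob_pow (a::'a set) (p ^ n)) (p ^ k))"
  unfolding Jc_def by (simp add: frob_pow_frob_pow)

lemma mem_Jc_iff: "(x::'a) \<in> Jc p a m \<longleftrightarrow> (\<exists>e. x ^ (p ^ e) \<in> frob_pow a (p ^ (m + e)))"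
  unfolding Jc_def frob_closure_def by (simp add: frob_pow_frob_pow)

lemma is_ideal_Jc: "is_ideal (Jc p (a::'a set) m)"
  unfolding Jc_def by (rule is_ideal_frob_closure)

lemma power_mem_Jc: "(x::'a) \<in> Jc p a m \<Longrightarrow> x ^ (p ^ k) \<in> Jc p a (m + k)"
  unfolding mem_Jc_iff
proof (elim exE)
  fix e assume "x ^ (p ^ e) \<in> frob_pow a (p ^ (m + e))"
  then have "(x ^ (p ^ e)) ^ (p ^ k) \<in> frob_pow a (p ^ (m + e + k))"
    by (rule power_mem_frob_pow_frob_pow)
  then have "(x ^ (p ^ k)) ^ (p ^ e) \<in> frob_pow a (p ^ (m + k + e))"
    by (simp add: power_pow_pow_add add_ac)
  then show "\<exists>e. (x ^ (p ^ k)) ^ (p ^ e) \<in> frob_pow a (p ^ (m + k + e))" ..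
qed

lemma mem_Jc_if_power_mem_Jc_Suc: "(x::'a) ^ p \<in> Jc p a (Suc m) \<Longrightarrow> x \<in> Jc p a m"
  unfolding mem_Jc_iff
proof (elim exE)
  fix e assume "(x ^ p) ^ (p ^ e) \<in> frob_pow a (p ^ (Suc m + e))"
  then have "x ^ (p ^ Suc e) \<in> frob_pow a (p ^ (m + Suc e))"
    by (simp add: power_mult[symmetric] mult.commute)
  then show "\<exists>e. x ^ (p ^ e) \<in> frob_pow a (p ^ (m + e))" ..
qed

section \<open>Weak test elements\<close>

lemma weak_test_element_mult_mem_frob_closure:
  assumes wt: "weak_test_element p w0 (c::'a)" and b: "is_ideal b" and s: "s \<in> tight_closure p b"
  shows "c * s ^ (p ^ k) \<in> frob_closure p (frob_pow (b::'a set) (p ^ k))"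
proof -
  have "c * s ^ (p ^ (k + w0)) \<in> frob_pow b (p ^ (k + w0))"
    using weak_test_elementD[OF wt b s] by simp
  then have "c ^ (p ^ w0 - 1) * (c * s ^ (p ^ (k + w0))) \<in> frob_pow (frob_pow b (p ^ k)) (p ^ w0)"
    unfolding frob_pow_frob_pow by (rule ideal_mult_left[OF is_ideal_frob_pow])
  moreover have "c ^ (p ^ w0 - 1) * (c * s ^ (p ^ (k + w0))) = (c * s ^ (p ^ k)) ^ (p ^ w0)"
  proof -
    have "c ^ (p ^ w0 - 1) * c = c ^ (p ^ w0)"
      by (rule power_minus_mult) (simp add: p_pos)
    then show ?thesis
      by (simp add: power_mult_distrib power_pow_pow_add flip: mult.assoc)
  qed
  ultimately have "(c * s ^ (p ^ k)) ^ (p ^ w0) \<in> frob_pow (frob_pow b (p ^ k)) (p ^ w0)"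
    by metis
  then show ?thesis
    unfolding frob_closure_def by blast
qed

lemma tight_closure_if_mult_mem_frob_closure:
  assumes wt: "weak_test_element p w0 (c::'a)" and d: "d \<in> R_circ" and b: "is_ideal b"
    and ds: "\<And>k. d * s ^ (p ^ k) \<in> frob_closure p (frob_pow (b::'a set) (p ^ k))"
  shows "s \<in> tight_closure p b"
proof -
  have "c * d ^ (p ^ w0) * s ^ (p ^ j) \<in> frob_pow b (p ^ j)" if "w0 \<le> j" for j
  proof -
    define k where "k = j - w0"
    with that have j: "j = k + w0"
      by simp
    have "d * s ^ (p ^ k) \<in> tight_closure p (frob_pow b (p ^ k))"
      using ds frob_closure_subset_tight_closure by blast
    then have "c * (d * s ^ (p ^ k)) ^ (p ^ w0) \<in> frob_pow (frob_pow b (p ^ k)) (p ^ w0)"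
      using weak_test_elementD[OF wt is_ideal_frob_pow] by blast
    then show ?thesis
      unfolding j frob_pow_frob_pow by (simp add: power_mult_distrib power_pow_pow_add mult.assoc)
  qed
  moreover have "c * d ^ (p ^ w0) \<in> R_circ"
    using weak_test_element_R_circ[OF wt] d R_circ_mult R_circ_power by blast
  ultimately show ?thesis
    unfolding tight_closure_def by blast
qed

lemma weak_test_element_mult_mem_Jc:
  assumes "weak_test_element p w0 (c::'a)" "s \<in> tight_closure p (frob_pow (a::'a set) (p ^ n))"
  shows "c * s ^ (p ^ k) \<in> Jc p a (n + k)"
  unfolding Jc_add by (rule weak_test_element_mult_mem_frob_closure[OF assms(1) is_ideal_frob_pow assms(2)])

lemma tight_closure_if_mult_mem_Jc:
  assumes "weak_test_element p w0 (c::'a)" "d \<in> R_circ" "\<And>k. d * s ^ (p ^ k) \<in> Jc p (a::'a set) (n + k)"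
  shows "s \<in> tight_closure p (frob_pow a (p ^ n))"
  using assms(3) unfolding Jc_add
  by (rule tight_closure_if_mult_mem_frob_closure[OF assms(1,2) is_ideal_frob_pow])

section \<open>The module G\<close>

lemma Gcar_component_nonempty:
  assumes "g \<in> Gcar p" "is_ideal a"
  obtains s where "(s::'a) \<in> g a n"
proof -
  obtain r where "g a n = coset r (Jc p a n)"
    using assms unfolding Gcar_def by blast
  then show thesis
    using that coset_self[OF is_ideal_Jc] by blast
qed

lemma mult_power_mem_Gact:
  assumes "is_ideal a" "s \<in> g a n"
  shows "r * (s::'a) ^ (p ^ k) \<in> Gact p r k g a (n + k)"
proof -
  have "r * s ^ (p ^ k) + 0 \<in> {r * s ^ (p ^ k) + j | s j. s \<in> g a n \<and> j \<in> Jc p a (n + k)}"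
    using assms(2) ideal_zero[OF is_ideal_Jc] by blast
  then show ?thesis
    using assms(1) unfolding Gact_def by simp
qed

lemma Gact_eq_GzeroD:
  "Gact p r k g = Gzero p \<Longrightarrow> is_ideal a \<Longrightarrow> s \<in> g a n \<Longrightarrow> r * (s::'a) ^ (p ^ k) \<in> Jc p a (n + k)"
  using mult_power_mem_Gact[of a s g n r k] by (simp add: Gzero_def)

lemma Gact_eq_GzeroI:
  assumes g: "g \<in> Gcar p"
    and H: "\<And>a n s. is_ideal a \<Longrightarrow> s \<in> g a n \<Longrightarrow> r * (s::'a) ^ (p ^ k) \<in> Jc p a (n + k)"
  shows "Gact p r k g = Gzero p"
proof (intro ext)
  fix a m
  show "Gact p r k g a m = Gzero p a m"
  proof (cases "is_ideal a \<and> k \<le> m")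
    case False
    then show ?thesis
      unfolding Gact_def Gzero_def by auto
  next
    case True
    define n where "n = m - k"
    with True have m: "m = n + k"
      by simp
    obtain s0 where s0: "s0 \<in> g a n"
      using Gcar_component_nonempty[OF g] True by blast
    have "{r * s ^ (p ^ k) + j | s j. s \<in> g a n \<and> j \<in> Jc p a m} = Jc p a m"
      using H[OF conjunct1[OF True]] unfolding m by (rule ideal_absorbs_translates[OF is_ideal_Jc s0])
    then show ?thesis
      using True unfolding Gact_def Gzero_def m by simp
  qed
qed

lemma Gzero_in_Gcar: "Gzero p \<in> (Gcar p :: 'a G_elt set)"
  unfolding Gcar_def
proof (intro CollectI conjI allI impI)
  fix a :: "'a set" and n
  show "\<exists>r. Gzero p a n = coset r (Jc p a n)"
    unfolding Gzero_def using coset_zero by metis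
qed (simp_all add: Gzero_def)

lemma Gadd_in_Gcar:
  assumes g: "g \<in> Gcar p" and h: "h \<in> (Gcar p :: 'a G_elt set)"
  shows "Gadd g h \<in> Gcar p"
proof -
  have comp: "Gadd g h a n = coset (r + t) (Jc p a n)"
    if "g a n = coset r (Jc p a n)" "h a n = coset t (Jc p a n)" for a n r t
    using that coset_add[OF is_ideal_Jc] unfolding Gadd_def by simp
  have zero: "Gadd g h a n = Jc p a n" if "g a n = Jc p a n" "h a n = Jc p a n" for a n
    using comp[of a n 0 0] that by (simp add: coset_zero)
  have "{(a, n). Gadd g h a n \<noteq> Jc p a n} \<subseteq> {(a, n). g a n \<noteq> Jc p a n} \<union> {(a, n). h a n \<noteq> Jc p a n}"
    using zero by auto
  moreover have "finite ({(a, n). g a n \<noteq> Jc p a n} \<union> {(a, n). h a n \<noteq> Jc p a n})"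
    using g h unfolding Gcar_def by simp
  moreover have "\<exists>r. Gadd g h a n = coset r (Jc p a n)" if "is_ideal a" for a n
    using g h that comp unfolding Gcar_def by blast
  moreover have "Gadd g h a n = Jc p a n" if "\<not> is_ideal a" for a n
  proof (rule zero)
    show "g a n = Jc p a n" "h a n = Jc p a n"
      using g h that unfolding Gcar_def by simp_all
  qed
  ultimately show ?thesis
    unfolding Gcar_def using finite_subset by blast
qed

lemma Gact_coset:
  assumes a: "is_ideal a" and g: "g a n = coset r0 (Jc p a n)"
  shows "Gact p r k g a (n + k) = coset (r * (r0::'a) ^ (p ^ k)) (Jc p a (n + k))"
proof -
  have J: "is_ideal (Jc p a (n + k))"
    by (rule is_ideal_Jc)
  have "{r * s ^ (p ^ k) + j | s j. s \<in> coset r0 (Jc p a n) \<and> j \<in> Jc p a (n + k)}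
      = coset (r * r0 ^ (p ^ k)) (Jc p a (n + k))"
  proof (intro antisym subsetI)
    fix x assume "x \<in> {r * s ^ (p ^ k) + j | s j. s \<in> coset r0 (Jc p a n) \<and> j \<in> Jc p a (n + k)}"
    then obtain i j where i: "i \<in> Jc p a n" and j: "j \<in> Jc p a (n + k)"
      and x: "x = r * (r0 + i) ^ (p ^ k) + j"
      unfolding coset_def by blast
    have "r * i ^ (p ^ k) + j \<in> Jc p a (n + k)"
      by (rule ideal_add[OF J ideal_mult_left[OF J power_mem_Jc[OF i]] j])
    moreover have "x = r * r0 ^ (p ^ k) + (r * i ^ (p ^ k) + j)"
      unfolding x frobenius_add by (simp add: distrib_left add_ac)
    ultimately show "x \<in> coset (r * r0 ^ (p ^ k)) (Jc p a (n + k))"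
      unfolding coset_def by blast
  next
    fix x assume "x \<in> coset (r * r0 ^ (p ^ k)) (Jc p a (n + k))"
    then obtain j where "j \<in> Jc p a (n + k)" "x = r * r0 ^ (p ^ k) + j"
      unfolding coset_def by blast
    then show "x \<in> {r * s ^ (p ^ k) + j | s j. s \<in> coset r0 (Jc p a n) \<and> j \<in> Jc p a (n + k)}"
      using coset_self[OF is_ideal_Jc] by blast
  qed
  then show ?thesis
    using a g unfolding Gact_def by simp
qed

lemma Gact_support_subset:
  "{(a, m). Gact p r k g a m \<noteq> Jc p a m} \<subseteq> (\<lambda>(a, n). (a, n + k)) ` {(a, n). g a n \<noteq> Jc p (a::'a set) n}"
proof clarify
  fix a m assume ne: "Gact p r k g a m \<noteq> Jc p a m"
  then have a: "is_ideal a" and "k \<le> m"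
    unfolding Gact_def by (auto split: if_splits)
  define n where "n = m - k"
  with \<open>k \<le> m\<close> have m: "m = n + k"
    by simp
  have "g a n \<noteq> Jc p a n"
  proof
    assume "g a n = Jc p a n"
    then have "Gact p r k g a m = Jc p a m"
      using Gact_coset[OF a, of g n 0 r k] p_pos unfolding m by (simp add: coset_zero power_0_left)
    with ne show False ..
  qed
  then show "(a, m) \<in> (\<lambda>(a, n). (a, n + k)) ` {(a, n). g a n \<noteq> Jc p a n}"
    unfolding m by force
qed

lemma Gact_in_Gcar:
  assumes g: "g \<in> (Gcar p :: 'a G_elt set)"
  shows "Gact p r k g \<in> Gcar p"
proof -
  have "\<exists>t. Gact p r k g a m = coset t (Jc p a m)" if a: "is_ideal a" for a m
  proof (cases "k \<le> m")
    case True
    define n where "n = m - k"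
    with True have m: "m = n + k"
      by simp
    obtain r0 where "g a n = coset r0 (Jc p a n)"
      using g a unfolding Gcar_def by blast
    then show ?thesis
      using Gact_coset[OF a] unfolding m by blast
  next
    case False
    then have "Gact p r k g a m = coset 0 (Jc p a m)"
      unfolding Gact_def by (simp add: coset_zero)
    then show ?thesis ..
  qed
  moreover have "finite {(a, m). Gact p r k g a m \<noteq> Jc p a m}"
    using g finite_subset[OF Gact_support_subset] unfolding Gcar_def by blast
  moreover have "Gact p r k g a m = Jc p a m" if "\<not> is_ideal a" for a m
    using that unfolding Gact_def by simp
  ultimately show ?thesis
    unfolding Gcar_def by blast
qed

lemma Gann_subset_Gcar: "Gann p bs \<subseteq> Gcar p"
  unfolding Gann_def by blast

lemma Gzero_in_Gann: "Gzero p \<in> Gann p (\<lambda>n. (B::'a set))"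
  unfolding Gann_def
proof (intro CollectI conjI Gzero_in_Gcar allI ballI)
  fix n r
  show "Gact p r n (Gzero p) = (Gzero p :: 'a G_elt)"
  proof (rule Gact_eq_GzeroI[OF Gzero_in_Gcar])
    fix a :: "'a set" and m s
    assume "s \<in> Gzero p a m"
    then show "r * s ^ (p ^ n) \<in> Jc p a (m + n)"
      unfolding Gzero_def by (rule ideal_mult_left[OF is_ideal_Jc power_mem_Jc])
  qed
qed

lemma Gadd_in_Gann:
  assumes g: "g \<in> Gann p (\<lambda>n. (B::'a set))" and h: "h \<in> Gann p (\<lambda>n. B)"
  shows "Gadd g h \<in> Gann p (\<lambda>n. B)"
proof -
  have gG: "g \<in> Gcar p" and hG: "h \<in> Gcar p"
    using g h Gann_subset_Gcar by blast+
  have "Gact p r n (Gadd g h) = Gzero p" if r: "r \<in> B" for r n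
  proof (rule Gact_eq_GzeroI[OF Gadd_in_Gcar[OF gG hG]])
    fix a m s assume a: "is_ideal a" and s: "s \<in> Gadd g h a m"
    then obtain s1 s2 where s12: "s = s1 + s2" "s1 \<in> g a m" "s2 \<in> h a m"
      unfolding Gadd_def by blast
    have rg: "Gact p r n g = Gzero p" and rh: "Gact p r n h = Gzero p"
      using g h r unfolding Gann_def by auto
    show "r * s ^ (p ^ n) \<in> Jc p a (m + n)"
      unfolding s12(1) frobenius_add distrib_left
      by (rule ideal_add[OF is_ideal_Jc Gact_eq_GzeroD[OF rg a s12(2)] Gact_eq_GzeroD[OF rh a s12(3)]])
  qed
  then show ?thesis
    using Gadd_in_Gcar[OF gG hG] unfolding Gann_def by blast
qed

lemma Gact_in_Gann:
  assumes g: "g \<in> Gann p (\<lambda>n. (B::'a set))"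
  shows "Gact p r k g \<in> Gann p (\<lambda>n. B)"
proof -
  have gG: "g \<in> Gcar p"
    using g Gann_subset_Gcar by blast
  have "Gact p r' n (Gact p r k g) = Gzero p" if r': "r' \<in> B" for r' n
  proof (rule Gact_eq_GzeroI[OF Gact_in_Gcar[OF gG]])
    fix a m s assume a: "is_ideal a" and s: "s \<in> Gact p r k g a m"
    show "r' * s ^ (p ^ n) \<in> Jc p a (m + n)"
    proof (cases "k \<le> m")
      case True
      define m0 where "m0 = m - k"
      with True have m: "m = m0 + k"
        by simp
      obtain s1 j where sj: "s = r * s1 ^ (p ^ k) + j" "s1 \<in> g a m0" "j \<in> Jc p a m"
        using s a unfolding Gact_def m by auto
      have "Gact p r' (k + n) g = Gzero p"
        using g r' unfolding Gann_def by blast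
      from Gact_eq_GzeroD[OF this a sj(2)]
      have "r' * s1 ^ (p ^ (k + n)) \<in> Jc p a (m + n)"
        unfolding m by (simp add: add.assoc)
      moreover have "j ^ (p ^ n) \<in> Jc p a (m + n)"
        by (rule power_mem_Jc[OF sj(3)])
      moreover have "r' * s ^ (p ^ n) = r ^ (p ^ n) * (r' * s1 ^ (p ^ (k + n))) + r' * j ^ (p ^ n)"
        unfolding sj(1) frobenius_add power_mult_distrib power_pow_pow_add
        by (simp add: algebra_simps)
      ultimately show ?thesis
        using is_ideal_Jc ideal_add ideal_mult_left by metis
    next
      case False
      then have "s \<in> Jc p a m"
        using s unfolding Gact_def by simp
      then show ?thesis
        by (rule ideal_mult_left[OF is_ideal_Jc power_mem_Jc])
    qed
  qed
  then show ?thesis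
    using Gact_in_Gcar[OF gG] unfolding Gann_def by blast
qed

lemma Gsubmodule_Gann_const: "Gsubmodule p (Gann p (\<lambda>n. (B::'a set)))"
  unfolding Gsubmodule_def
  using Gann_subset_Gcar Gzero_in_Gann Gadd_in_Gann Gact_in_Gann by blast

lemma mem_grann_comp_iff:
  assumes N: "N \<subseteq> (Gcar p :: 'a G_elt set)"
  shows "r \<in> grann_comp p N k \<longleftrightarrow>
    (\<forall>g\<in>N. \<forall>a n s. is_ideal a \<longrightarrow> s \<in> g a n \<longrightarrow> r * s ^ (p ^ k) \<in> Jc p a (n + k))"
proof (intro iffI ballI allI impI)
  fix g a n s assume r: "r \<in> grann_comp p N k" and g: "g \<in> N" and a: "is_ideal a" and s: "s \<in> g a n"
  have "Gact p r k g = Gzero p"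
    using r g unfolding grann_comp_def by blast
  from Gact_eq_GzeroD[OF this a s] show "r * s ^ (p ^ k) \<in> Jc p a (n + k)" .
next
  assume H: "\<forall>g\<in>N. \<forall>a n s. is_ideal a \<longrightarrow> s \<in> g a n \<longrightarrow> r * s ^ (p ^ k) \<in> Jc p a (n + k)"
  have "Gact p r k g = Gzero p" if g: "g \<in> N" for g
  proof (rule Gact_eq_GzeroI)
    show "g \<in> Gcar p"
      using g N by blast
    fix a n s assume "is_ideal a" "s \<in> g a n"
    then show "r * s ^ (p ^ k) \<in> Jc p a (n + k)"
      using H g by blast
  qed
  then show "r \<in> grann_comp p N k"
    unfolding grann_comp_def by blast
qed

lemma is_ideal_grann_comp:
  assumes N: "N \<subseteq> (Gcar p :: 'a G_elt set)"
  shows "is_ideal (grann_comp p N k)"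
  unfolding is_ideal_def
proof (intro conjI ballI allI)
  show "0 \<in> grann_comp p N k"
    unfolding mem_grann_comp_iff[OF N] by (simp add: ideal_zero[OF is_ideal_Jc])
next
  fix x y assume "x \<in> grann_comp p N k" "y \<in> grann_comp p N k"
  then show "x + y \<in> grann_comp p N k"
    unfolding mem_grann_comp_iff[OF N] distrib_right by (blast intro: ideal_add[OF is_ideal_Jc])
next
  fix r x assume "x \<in> grann_comp p N k"
  then show "r * x \<in> grann_comp p N k"
    unfolding mem_grann_comp_iff[OF N] mult.assoc by (blast intro: ideal_mult_left[OF is_ideal_Jc])
qed

lemma grann_comp_Suc_subset:
  assumes N: "N \<subseteq> (Gcar p :: 'a G_elt set)"
  shows "grann_comp p N (Suc k) \<subseteq> grann_comp p N k"
proof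
  fix r assume r: "r \<in> grann_comp p N (Suc k)"
  have "r * s ^ (p ^ k) \<in> Jc p a (n + k)" if "g \<in> N" "is_ideal a" "s \<in> g a n" for g a n s
  proof (rule mem_Jc_if_power_mem_Jc_Suc)
    have "r * s ^ (p ^ Suc k) \<in> Jc p a (n + Suc k)"
      using r that unfolding mem_grann_comp_iff[OF N] by blast
    then have "r ^ (p - 1) * (r * s ^ (p ^ Suc k)) \<in> Jc p a (Suc (n + k))"
      by (simp add: ideal_mult_left[OF is_ideal_Jc])
    moreover have "r ^ (p - 1) * (r * s ^ (p ^ Suc k)) = (r * s ^ (p ^ k)) ^ p"
      unfolding mult.assoc[symmetric] power_minus_mult[OF p_pos]
      by (simp add: power_mult_distrib power_mult[symmetric] mult.commute)
    ultimately show "(r * s ^ (p ^ k)) ^ p \<in> Jc p a (Suc (n + k))"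
      by simp
  qed
  then show "r \<in> grann_comp p N k"
    unfolding mem_grann_comp_iff[OF N] by blast
qed

lemma grann_comp_subset_Suc:
  assumes N: "Gsubmodule p (N :: 'a G_elt set)"
  shows "grann_comp p N k \<subseteq> grann_comp p N (Suc k)"
proof
  have NG: "N \<subseteq> Gcar p"
    using N unfolding Gsubmodule_def by blast
  fix r assume r: "r \<in> grann_comp p N k"
  have "r * s ^ (p ^ Suc k) \<in> Jc p a (n + Suc k)" if g: "g \<in> N" and a: "is_ideal a" and s: "s \<in> g a n"
    for g a n s
  proof -
    have "Gact p 1 1 g \<in> N"
      using N g unfolding Gsubmodule_def by blast
    moreover have "s ^ p \<in> Gact p 1 1 g a (n + 1)"
      using mult_power_mem_Gact[where g = g and n = n and r = 1 and k = 1, OF a s] by simp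
    ultimately have "r * (s ^ p) ^ (p ^ k) \<in> Jc p a (n + 1 + k)"
      using r a unfolding mem_grann_comp_iff[OF NG] by blast
    then show ?thesis
      by (simp add: power_mult[symmetric])
  qed
  then show "r \<in> grann_comp p N (Suc k)"
    unfolding mem_grann_comp_iff[OF NG] by blast
qed

lemma grann_comp_eq_0:
  assumes N: "Gsubmodule p (N :: 'a G_elt set)"
  shows "grann_comp p N k = grann_comp p N 0"
proof (induction k)
  case (Suc k)
  have "N \<subseteq> Gcar p"
    using N unfolding Gsubmodule_def by blast
  then show ?case
    using grann_comp_Suc_subset grann_comp_subset_Suc[OF N] Suc.IH by blast
qed simp

lemma subset_Usub_if_R_circ_annihilates:
  assumes wt: "weak_test_element p w0 (c::'a)" and N: "N \<subseteq> (Gcar p :: 'a G_elt set)"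
    and d: "d \<in> R_circ" and dN: "\<And>k. d \<in> grann_comp p N k"
  shows "N \<subseteq> Usub p"
proof
  fix g assume g: "g \<in> N"
  have "s \<in> tight_closure p (frob_pow a (p ^ n))" if a: "is_ideal a" and s: "s \<in> g a n" for a n s
  proof (rule tight_closure_if_mult_mem_Jc[OF wt d])
    fix k
    show "d * s ^ (p ^ k) \<in> Jc p a (n + k)"
      using dN[of k] g a s unfolding mem_grann_comp_iff[OF N] by blast
  qed
  then show "g \<in> Usub p"
    using g N unfolding Usub_def by blast
qed

lemma Usub_subset_Gann:
  assumes wt: "weak_test_element p w0 (c::'a)"
  shows "Usub p \<subseteq> Gann p (\<lambda>n. ideal_gen {c})"
proof
  fix g :: "'a G_elt" assume g: "g \<in> Usub p"
  then have gG: "g \<in> Gcar p" and g_single: "{g} \<subseteq> Gcar p"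
    unfolding Usub_def by blast+
  have "c \<in> grann_comp p {g} k" for k
    unfolding mem_grann_comp_iff[OF g_single]
    using g weak_test_element_mult_mem_Jc[OF wt] unfolding Usub_def by blast
  then have "ideal_gen {c} \<subseteq> grann_comp p {g} k" for k
    by (simp add: ideal_gen_least[OF is_ideal_grann_comp[OF g_single]])
  then show "g \<in> Gann p (\<lambda>n. ideal_gen {c})"
    using gG unfolding Gann_def grann_comp_def by blast
qed

lemma Usub_eq_Gann:
  assumes wt: "weak_test_element p w0 (c::'a)"
  shows "Usub p = Gann p (\<lambda>n. ideal_gen {c})"
proof
  show "Usub p \<subseteq> Gann p (\<lambda>n. ideal_gen {c})"
    by (rule Usub_subset_Gann[OF wt])
  have "c \<in> grann_comp p (Gann p (\<lambda>n. ideal_gen {c})) k" for k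
    using subset_ideal_gen[of "{c}"] unfolding Gann_def grann_comp_def by blast
  then show "Gann p (\<lambda>n. ideal_gen {c}) \<subseteq> Usub p"
    by (rule subset_Usub_if_R_circ_annihilates[OF wt Gann_subset_Gcar weak_test_element_R_circ[OF wt]])
qed

lemma grann_comp_Usub_least:
  assumes noeth: "noetherian TYPE('a)" and wt: "weak_test_element p w0 (c::'a)"
    and b: "b \<in> G_special_ideals p" "0 < ideal_height (b::'a set)"
  shows "grann_comp p (Usub p) n \<subseteq> b"
proof -
  obtain M where M: "Gsubmodule p M" "\<And>k. grann_comp p M k = b"
    using b(1) unfolding G_special_ideals_def by blast
  have MG: "M \<subseteq> Gcar p"
    using M(1) unfolding Gsubmodule_def by blast
  have "is_ideal b"
    using is_ideal_grann_comp[OF MG] M(2) by metis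
  then obtain d where "d \<in> b" "d \<in> R_circ"
    using ideal_height_pos_iff_meets_R_circ[OF noeth] b(2) by blast
  then have "M \<subseteq> Usub p"
    using subset_Usub_if_R_circ_annihilates[OF wt MG] M(2) by blast
  then have "grann_comp p (Usub p) n \<subseteq> grann_comp p M n"
    unfolding grann_comp_def by blast
  then show ?thesis
    using M(2) by simp
qed

lemma Gsubmodule_Usub:
  assumes "weak_test_element p w0 (c::'a)"
  shows "Gsubmodule p (Usub p :: 'a G_elt set)"
  unfolding Usub_eq_Gann[OF assms] by (rule Gsubmodule_Gann_const)

lemma grann_comp_Usub_in_G_special_ideals:
  assumes "weak_test_element p w0 (c::'a)"
  shows "grann_comp p (Usub p :: 'a G_elt set) 0 \<in> G_special_ideals p"
  unfolding G_special_ideals_def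
proof (intro CollectI exI conjI)
  show "Gsubmodule p (Usub p :: 'a G_elt set)"
    by (rule Gsubmodule_Usub[OF assms])
  show "\<forall>n. grann_comp p (Usub p) n = grann_comp p (Usub p :: 'a G_elt set) 0"
    by (rule allI, rule grann_comp_eq_0[OF Gsubmodule_Usub[OF assms]])
qed

lemma ideal_height_grann_comp_Usub_pos:
  assumes noeth: "noetherian TYPE('a)" and wt: "weak_test_element p w0 (c::'a)"
  shows "0 < ideal_height (grann_comp p (Usub p :: 'a G_elt set) n)"
proof -
  have "c \<in> grann_comp p (Usub p :: 'a G_elt set) n"
    using subset_ideal_gen[of "{c}"] unfolding Usub_eq_Gann[OF wt] Gann_def grann_comp_def by blast
  moreover have "is_ideal (grann_comp p (Usub p :: 'a G_elt set) n)"
    by (rule is_ideal_grann_comp) (auto simp: Usub_def)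
  ultimately show ?thesis
    using ideal_height_pos_iff_meets_R_circ[OF noeth] weak_test_element_R_circ[OF wt] by blast
qed

end

theorem theorem2p7:
  fixes c :: "'a::comm_ring_1" and p w0 :: nat
  assumes "prime p" and "CHAR('a) = p" and "noetherian TYPE('a)"
    and "weak_test_element p w0 c"
  shows "Usub p = Gann p (\<lambda>n. ideal_gen {c})
    \<and> (\<exists>b::'a set. \<forall>n. grann_comp p (Usub p) n = b)
    \<and> (\<forall>b::'a set. (\<forall>n. grann_comp p (Usub p) n = b) \<longrightarrow>
          b \<in> G_special_ideals p \<and> 0 < ideal_height b
          \<and> (\<forall>b'\<in>G_special_ideals p. 0 < ideal_height b' \<longrightarrow> b \<subseteq> b'))"
proof (intro conjI allI impI ballI)
  show "Usub p = Gann p (\<lambda>n. ideal_gen {c})"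
    by (rule Usub_eq_Gann[OF assms(1,2,4)])
  show "\<exists>b::'a set. \<forall>n. grann_comp p (Usub p) n = b"
    by (rule exI, rule allI, rule grann_comp_eq_0[OF assms(1,2) Gsubmodule_Usub[OF assms(1,2,4)]])
next
  fix b :: "'a set" assume "\<forall>n. grann_comp p (Usub p) n = b"
  then show "b \<in> G_special_ideals p"
    using grann_comp_Usub_in_G_special_ideals[OF assms(1,2,4)] by simp
next
  fix b :: "'a set" assume "\<forall>n. grann_comp p (Usub p) n = b"
  then show "0 < ideal_height b"
    using ideal_height_grann_comp_Usub_pos[OF assms, of 0] by simp
next
  fix b b' :: "'a set" assume "\<forall>n. grann_comp p (Usub p) n = b" "b' \<in> G_special_ideals p" "0 < ideal_height b'"
  then show "b \<subseteq> b'"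
    using grann_comp_Usub_least[OF assms, of b' 0] by simp
qed

end
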